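(* Let $\{A_n\}_{n\geqslant 1}$ be i.i.d. nonnegative random variables with Laplace–Stieltjes transform $\alpha(s)=\mathbb{E}[e^{-sA_1}]$, and let $\{B_n\}_{n\geqslant 1}$ be i.i.d. Erlang distributed with $N$ phases and rate $\mu>0$, independent of $\{A_n\}$. Let $W_1=w\geqslant 0$ and $W_{n+1}=\max\{0,\,B_{n+1}-A_n-W_n\}$ for $n\geqslant 1$. Define, for $i,j\in\{1,\dots,N\}$, $$p_{ij}=\frac{(-\mu)^{N-j}}{2^i}\sum_{\ell=0}^{N-j}\binom{i+\ell-1}{i-1}\frac{\alpha^{(N-j-\ell)}(\mu)}{(N-j-\ell)!}\left(-\frac{1}{2\mu}\right)^{\ell},\qquad p_{0j}=\frac{(-\mu)^{N-j}}{(N-j)!}\alpha^{(N-j)}(\mu),$$ and $p_{i0}=1-\sum_{j=1}^N p_{ij}$ for $i\in\{0,\dots,N\}$. Define $$\varpi_{2,j}=(-\mu)^{N-j}e^{-\mu w}\sum_{\ell=0}^{N-j}\frac{(-w)^{\ell}}{\ell!}\frac{\alpha^{(N-j-\ell)}(\mu)}{(N-j-\ell)!},\quad j=1,\dots,N,\qquad \varpi_{2,0}=1-\sum_{j=1}^N\varpi_{2,j},$$ and recursively $\varpi_{n,j}=\sum_{i=0}^N\varpi_{n-1,i}\,p_{ij}$ for $n\geqslant 3$, $j\in\{0,\dots,N\}$ (i.e. $\varpi_n^{\mathrm T}=\varpi_2^{\mathrm T}\mathbf P^{n-2}$ with $\mathbf P=(p_{ij})_{i,j=0}^N$). Then for every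 $n\geqslant 2$, $W_n$ has a mixed-Erlang distribution: $$\mathbb{P}[W_n\leqslant x]=\sum_{i=0}^N\varpi_{n,i}\,G_i(x),\qquad x\geqslant 0.$$
   Context: $\alpha^{(m)}$ denotes the $m$-th derivative of $\alpha$. $G_i$ denotes the distribution function of the Erlang distribution with $i$ phases and rate $\mu$ for $i\geqslant 1$, and $G_0(x)=1$ for $x\geqslant0$ (point mass at $0$). The numbers $\varpi_{n,i}$ equal $\mathbb{P}[F_n=i]$, where $F_n$ is the number of remaining exponential preparation phases at the moment the $n$-th waiting time starts; $(F_n)$ is a Markov chain with transition probabilities $p_{ij}$. *)

theory Defs
  imports "HOL-Probability.Probability"
begin

definition p_pos :: "(real \<Rightarrow> real) \<Rightarrow> nat \<Rightarrow> real \<Rightarrow> nat \<Rightarrow> nat \<Rightarrow> real" where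
  "p_pos \<alpha> N \<mu> i j =
     (if i = 0 then (-\<mu>) ^ (N - j) / fact (N - j) * (deriv ^^ (N - j)) \<alpha> \<mu>
      else (-\<mu>) ^ (N - j) / 2 ^ i *
        (\<Sum>l = 0..N - j. real ((i + l - 1) choose (i - 1)) *
            ((deriv ^^ (N - j - l)) \<alpha> \<mu> / fact (N - j - l)) * (- 1 / (2 * \<mu>)) ^ l))"

definition pmat :: "(real \<Rightarrow> real) \<Rightarrow> nat \<Rightarrow> real \<Rightarrow> nat \<Rightarrow> nat \<Rightarrow> real" where
  "pmat \<alpha> N \<mu> i j =
     (if j = 0 then 1 - (\<Sum>j' = 1..N. p_pos \<alpha> N \<mu> i j') else p_pos \<alpha> N \<mu> i j)"

definition varpi2_pos :: "(real \<Rightarrow> real) \<Rightarrow> nat \<Rightarrow> real \<Rightarrow> real \<Rightarrow> nat \<Rightarrow> real" where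
  "varpi2_pos \<alpha> N \<mu> w j =
     (-\<mu>) ^ (N - j) * exp (- \<mu> * w) *
       (\<Sum>l = 0..N - j. ((- w) ^ l / fact l) * ((deriv ^^ (N - j - l)) \<alpha> \<mu> / fact (N - j - l)))"

definition varpi2 :: "(real \<Rightarrow> real) \<Rightarrow> nat \<Rightarrow> real \<Rightarrow> real \<Rightarrow> nat \<Rightarrow> real" where
  "varpi2 \<alpha> N \<mu> w j =
     (if j = 0 then 1 - (\<Sum>j' = 1..N. varpi2_pos \<alpha> N \<mu> w j') else varpi2_pos \<alpha> N \<mu> w j)"

text \<open>varpi_aux k j = varpi_{k+2, j}\<close>
fun varpi_aux :: "(real \<Rightarrow> real) \<Rightarrow> nat \<Rightarrow> real \<Rightarrow> real \<Rightarrow> nat \<Rightarrow> nat \<Rightarrow> real" where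
  "varpi_aux \<alpha> N \<mu> w 0 j = varpi2 \<alpha> N \<mu> w j"
| "varpi_aux \<alpha> N \<mu> w (Suc k) j = (\<Sum>i = 0..N. varpi_aux \<alpha> N \<mu> w k i * pmat \<alpha> N \<mu> i j)"

definition varpi :: "(real \<Rightarrow> real) \<Rightarrow> nat \<Rightarrow> real \<Rightarrow> real \<Rightarrow> nat \<Rightarrow> nat \<Rightarrow> real" where
  "varpi \<alpha> N \<mu> w n j = varpi_aux \<alpha> N \<mu> w (n - 2) j"

text \<open>G_i: Erlang CDF with i phases and rate mu (i >= 1); G_0 is the point mass at 0.
  Library erlang_CDF k has k+1 phases.\<close>
definition G :: "real \<Rightarrow> nat \<Rightarrow> real \<Rightarrow> real" where
  "G \<mu> i x = (if i = 0 then (if 0 \<le> x then 1 else 0) else erlang_CDF (i - 1) \<mu> x)"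

end

theory Submission
  imports Defs
begin

(*
  Condition on T = A_n + W_n = t.  Expanding the Erlang density of B_{n+1} around t (a
  phase-by-phase memorylessness), max(0, B_{n+1} - t) is a mixture of the Erlang laws with
  j = 1..N phases, weighted by the Poisson probabilities e^{-\<mu> t} (\<mu> t)^{N-j} / (N-j)!, plus an
  atom at 0.  Taking expectations in t, the binomial expansion of (\<mu> (a + y))^{N-j} together with
  independence of A_n and W_n splits each weight into moments E[A^r e^{-\<mu> A}] = (-1)^r \<alpha>^{(r)}(\<mu>)
  (the Laplace transform may be differentiated under the integral) and moments
  E[W^l e^{-\<mu> W}].  The latter equal w^l e^{-\<mu> w} for n = 1, and are explicit Erlang integrals
  when W_n is mixed Erlang; this yields exactly \<varpi>_2 and \<varpi>_{n+1} = \<varpi>_n P, and the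
  theorem follows by induction on n.
*)

section \<open>Laplace transforms of nonnegative random variables\<close>

lemma power_div_fact_le_exp:
  fixes x :: real
  assumes "0 \<le> x"
  shows "x ^ l / fact l \<le> exp x"
proof -
  obtain t where t: "\<bar>t\<bar> \<le> \<bar>x\<bar>"
    "exp x = (\<Sum>m<Suc l. x ^ m / fact m) + exp t / fact (Suc l) * x ^ Suc l"
    using Maclaurin_exp_le[of x "Suc l"] by blast
  have "x ^ l / fact l \<le> (\<Sum>m<Suc l. x ^ m / fact m)"
    using assms by (intro member_le_sum) auto
  also have "\<dots> \<le> exp x"
    using t assms by simp
  finally show ?thesis .
qed

lemma power_mult_exp_le:
  fixes z \<mu> :: real
  assumes "0 \<le> z" "0 < \<mu>"
  shows "z ^ l * exp (- \<mu> * z) \<le> fact l / \<mu> ^ l"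
proof -
  have "(\<mu> * z) ^ l / fact l \<le> exp (\<mu> * z)"
    using assms by (intro power_div_fact_le_exp) auto
  then have "z ^ l * exp (- \<mu> * z) * \<mu> ^ l \<le> fact l * (exp (\<mu> * z) * exp (- \<mu> * z))"
    by (simp add: divide_le_eq power_mult_distrib mult_ac)
  then show ?thesis
    using assms by (simp add: le_divide_eq exp_minus)
qed

lemma laplace_difference_quotient_bound:
  fixes a s h :: real
  assumes a: "0 \<le> a" and s: "0 < s" and h: "h \<noteq> 0" "\<bar>h\<bar> \<le> s / 2"
  shows "\<bar>(- a) ^ k * exp (- s * a) * ((exp (- h * a) - 1) / h + a)\<bar>
           \<le> \<bar>h\<bar> * (fact (k + 2) / (s / 2) ^ (k + 2))"
proof -
  have taylor: "\<bar>exp (- h * a) - 1 - (- h * a)\<bar> \<le> exp (\<bar>h\<bar> * a) * (\<bar>h\<bar> * a)\<^sup>2"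
    using Taylor_exp_field[of "- h * a" 1] a by (simp add: abs_mult power2_eq_square)
  have "(exp (- h * a) - 1) / h + a = (exp (- h * a) - 1 - (- h * a)) / h"
    using h by (simp add: field_simps)
  then have "\<bar>(- a) ^ k * exp (- s * a) * ((exp (- h * a) - 1) / h + a)\<bar>
      = a ^ k * exp (- s * a) * (\<bar>exp (- h * a) - 1 - (- h * a)\<bar> / \<bar>h\<bar>)"
    using a by (simp add: abs_mult power_abs)
  also have "\<dots> \<le> a ^ k * exp (- s * a) * (exp (\<bar>h\<bar> * a) * (\<bar>h\<bar> * a)\<^sup>2 / \<bar>h\<bar>)"
    using taylor a by (intro mult_left_mono divide_right_mono) auto
  also have "\<dots> = \<bar>h\<bar> * (a ^ (k + 2) * exp (- s * a + \<bar>h\<bar> * a))"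
    using h by (simp add: power2_eq_square field_simps power_add exp_add exp_diff exp_minus abs_mult_self_eq)
  also have "\<dots> \<le> \<bar>h\<bar> * (a ^ (k + 2) * exp (- (s / 2) * a))"
    using h a mult_right_mono[OF h(2) a] by (intro mult_left_mono) (auto simp: algebra_simps)
  also have "\<dots> \<le> \<bar>h\<bar> * (fact (k + 2) / (s / 2) ^ (k + 2))"
    using power_mult_exp_le[of a "s / 2" "k + 2"] a s by (intro mult_left_mono) auto
  finally show ?thesis .
qed

context prob_space
begin

lemma integrable_power_mult_exp:
  fixes X :: "'a \<Rightarrow> real"
  assumes [measurable]: "X \<in> borel_measurable M" and X0: "AE \<omega> in M. 0 \<le> X \<omega>" and s: "0 < s"
  shows "integrable M (\<lambda>\<omega>. X \<omega> ^ k * exp (- s * X \<omega>))"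
    and "integrable M (\<lambda>\<omega>. (- X \<omega>) ^ k * exp (- s * X \<omega>))"
proof -
  have bound: "AE \<omega> in M. \<bar>X \<omega> ^ k * exp (- s * X \<omega>)\<bar> \<le> fact k / s ^ k"
    using X0 by eventually_elim (use power_mult_exp_le[OF _ s] in auto)
  show "integrable M (\<lambda>\<omega>. X \<omega> ^ k * exp (- s * X \<omega>))"
    using bound by (intro integrable_const_bound) auto
  show "integrable M (\<lambda>\<omega>. (- X \<omega>) ^ k * exp (- s * X \<omega>))"
    using bound by (intro integrable_const_bound) (auto simp: abs_mult power_abs)
qed

lemma laplace_moment_difference_quotient_bound:
  fixes X :: "'a \<Rightarrow> real"
  defines "L \<equiv> \<lambda>k s. \<integral>\<omega>. (- X \<omega>) ^ k * exp (- s * X \<omega>) \<partial>M"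
  assumes X[measurable]: "X \<in> borel_measurable M" and X0: "AE \<omega> in M. 0 \<le> X \<omega>" and s: "0 < s"
    and y: "y \<noteq> s" "\<bar>y - s\<bar> \<le> s / 2"
  shows "\<bar>(L k y - L k s) / (y - s) - L (Suc k) s\<bar> \<le> \<bar>y - s\<bar> * (fact (k + 2) / (s / 2) ^ (k + 2))"
proof -
  define h where "h = y - s"
  have h: "h \<noteq> 0" "\<bar>h\<bar> \<le> s / 2"
    using y by (auto simp: h_def)
  have "0 < y"
    using y(2) s by linarith
  note integrable = integrable_power_mult_exp(2)[OF X X0 \<open>0 < y\<close>]
    integrable_power_mult_exp(2)[OF X X0 s]
  define g where "g \<omega> = (- X \<omega>) ^ k * exp (- s * X \<omega>) * ((exp (- h * X \<omega>) - 1) / h + X \<omega>)" for \<omega>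
  have g_eq: "g = (\<lambda>\<omega>. ((- X \<omega>) ^ k * exp (- y * X \<omega>) - (- X \<omega>) ^ k * exp (- s * X \<omega>)) / h
                       - (- X \<omega>) ^ Suc k * exp (- s * X \<omega>))"
  proof
    fix \<omega>
    have "exp (- y * X \<omega>) = exp (- s * X \<omega>) * exp (- h * X \<omega>)"
      by (simp add: h_def exp_add[symmetric] algebra_simps)
    then show "g \<omega> = ((- X \<omega>) ^ k * exp (- y * X \<omega>) - (- X \<omega>) ^ k * exp (- s * X \<omega>)) / h
                       - (- X \<omega>) ^ Suc k * exp (- s * X \<omega>)"
      using h by (simp add: g_def field_simps)
  qed
  have quotient_integrable:
    "integrable M (\<lambda>\<omega>. ((- X \<omega>) ^ k * exp (- y * X \<omega>) - (- X \<omega>) ^ k * exp (- s * X \<omega>)) / h)"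
    using integrable by (intro integrable_divide Bochner_Integration.integrable_diff)
  then have "integrable M g"
    unfolding g_eq using integrable_power_mult_exp(2)[OF X X0 s] by (rule Bochner_Integration.integrable_diff)
  have "(L k y - L k s) / (y - s) - L (Suc k) s = (\<integral>\<omega>. g \<omega> \<partial>M)"
    unfolding g_eq L_def h_def[symmetric]
    by (simp only: Bochner_Integration.integral_diff[OF quotient_integrable integrable_power_mult_exp(2)[OF X X0 s]]
        integral_divide_zero Bochner_Integration.integral_diff[OF integrable])
  also have "\<bar>\<dots>\<bar> \<le> (\<integral>\<omega>. \<bar>g \<omega>\<bar> \<partial>M)"
    by (rule integral_abs_bound)
  also have "\<dots> \<le> \<bar>h\<bar> * (fact (k + 2) / (s / 2) ^ (k + 2))"
  proof (rule integral_le_const)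
    show "integrable M (\<lambda>\<omega>. \<bar>g \<omega>\<bar>)"
      using \<open>integrable M g\<close> by (rule integrable_abs)
    show "AE \<omega> in M. \<bar>g \<omega>\<bar> \<le> \<bar>h\<bar> * (fact (k + 2) / (s / 2) ^ (k + 2))"
      using X0 by eventually_elim (use laplace_difference_quotient_bound[OF _ s h] in \<open>simp add: g_def\<close>)
  qed
  finally show ?thesis
    by (simp add: h_def)
qed

lemma laplace_moment_has_field_derivative:
  fixes X :: "'a \<Rightarrow> real"
  assumes X[measurable]: "X \<in> borel_measurable M" and X0: "AE \<omega> in M. 0 \<le> X \<omega>" and s: "0 < s"
  shows "((\<lambda>s. \<integral>\<omega>. (- X \<omega>) ^ k * exp (- s * X \<omega>) \<partial>M) has_field_derivative
           (\<integral>\<omega>. (- X \<omega>) ^ Suc k * exp (- s * X \<omega>) \<partial>M)) (at s)"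
proof -
  define L where "L k s = (\<integral>\<omega>. (- X \<omega>) ^ k * exp (- s * X \<omega>) \<partial>M)" for k s
  define K where "K = fact (k + 2) / (s / 2) ^ (k + 2)"
  have "((\<lambda>y. (L k y - L k s) / (y - s) - L (Suc k) s) \<longlongrightarrow> 0) (at s)"
  proof (rule Lim_null_comparison)
    show "\<forall>\<^sub>F y in at s. norm ((L k y - L k s) / (y - s) - L (Suc k) s) \<le> \<bar>y - s\<bar> * K"
      unfolding eventually_at using s laplace_moment_difference_quotient_bound[OF X X0 s]
      by (intro exI[of _ "s / 2"]) (auto simp: dist_real_def L_def K_def)
    have "((\<lambda>y. \<bar>y - s\<bar> * K) \<longlongrightarrow> \<bar>s - s\<bar> * K) (at s)"
      by (intro tendsto_intros)
    then show "((\<lambda>y. \<bar>y - s\<bar> * K) \<longlongrightarrow> 0) (at s)"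
      by simp
  qed
  then have "((\<lambda>y. (L k y - L k s) / (y - s)) \<longlongrightarrow> L (Suc k) s) (at s)"
    by (rule LIM_zero_cancel)
  then show ?thesis
    unfolding has_field_derivative_iff L_def .
qed

lemma higher_deriv_laplace_transform:
  fixes X :: "'a \<Rightarrow> real"
  assumes X[measurable]: "X \<in> borel_measurable M" and X0: "AE \<omega> in M. 0 \<le> X \<omega>" and "0 < s"
  shows "(deriv ^^ k) (\<lambda>s. \<integral>\<omega>. exp (- s * X \<omega>) \<partial>M) s = (\<integral>\<omega>. (- X \<omega>) ^ k * exp (- s * X \<omega>) \<partial>M)"
  using \<open>0 < s\<close>
proof (induction k arbitrary: s)
  case (Suc k)
  have "eventually (\<lambda>t. t \<in> {0<..}) (nhds s)"
    using Suc.prems by (intro eventually_nhds_in_open) auto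
  then have "eventually (\<lambda>t. (deriv ^^ k) (\<lambda>s. \<integral>\<omega>. exp (- s * X \<omega>) \<partial>M) t
               = (\<integral>\<omega>. (- X \<omega>) ^ k * exp (- t * X \<omega>) \<partial>M)) (nhds s)"
    by eventually_elim (rule Suc.IH, simp)
  then have "(deriv ^^ Suc k) (\<lambda>s. \<integral>\<omega>. exp (- s * X \<omega>) \<partial>M) s
      = deriv (\<lambda>t. \<integral>\<omega>. (- X \<omega>) ^ k * exp (- t * X \<omega>) \<partial>M) s"
    by (simp add: deriv_cong_ev)
  also have "\<dots> = (\<integral>\<omega>. (- X \<omega>) ^ Suc k * exp (- s * X \<omega>) \<partial>M)"
    by (rule DERIV_imp_deriv[OF laplace_moment_has_field_derivative[OF X X0 Suc.prems]])
  finally show ?case .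
qed simp

lemma expectation_power_mult_exp:
  fixes X :: "'a \<Rightarrow> real"
  assumes X[measurable]: "X \<in> borel_measurable M" and X0: "AE \<omega> in M. 0 \<le> X \<omega>" and s: "0 < s"
  shows "(\<integral>\<omega>. X \<omega> ^ r * exp (- s * X \<omega>) \<partial>M)
           = (- 1) ^ r * (deriv ^^ r) (\<lambda>s. \<integral>\<omega>. exp (- s * X \<omega>) \<partial>M) s"
proof -
  have "X \<omega> ^ r * exp (- s * X \<omega>) = (- 1) ^ r * ((- X \<omega>) ^ r * exp (- s * X \<omega>))" for \<omega>
    by (simp add: mult.assoc[symmetric] power_mult_distrib[symmetric])
  then have "(\<integral>\<omega>. X \<omega> ^ r * exp (- s * X \<omega>) \<partial>M)
      = (- 1) ^ r * (\<integral>\<omega>. (- X \<omega>) ^ r * exp (- s * X \<omega>) \<partial>M)"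
    by (simp only: integral_mult_right_zero)
  then show ?thesis
    by (simp only: higher_deriv_laplace_transform[OF X X0 s])
qed

end

section \<open>Erlang densities and Poisson weights\<close>

lemma has_bochner_integral_erlang_density:
  assumes "0 < l"
  shows "has_bochner_integral lborel (erlang_density k l) 1"
proof (rule has_bochner_integral_nn_integral)
  show "(\<integral>\<^sup>+ x. ennreal (erlang_density k l x) \<partial>lborel) = ennreal 1"
    using nn_integral_erlang_ith_moment[OF assms, of k 0] by simp
qed (use assms in auto)

lemma integrable_erlang_density [intro]: "0 < l \<Longrightarrow> integrable lborel (erlang_density k l)"
  using has_bochner_integral_erlang_density by (auto simp: has_bochner_integral_iff)

lemma integral_erlang_density [simp]: "0 < l \<Longrightarrow> integral\<^sup>L lborel (erlang_density k l) = 1"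
  using has_bochner_integral_erlang_density by (auto simp: has_bochner_integral_iff)

lemma integrable_erlang_density_mult_bounded:
  fixes \<psi> :: "real \<Rightarrow> real"
  assumes "0 < l" and [measurable]: "\<psi> \<in> borel_measurable borel" and C: "\<And>y. \<bar>\<psi> y\<bar> \<le> C"
  shows "integrable lborel (\<lambda>y. erlang_density k l y * \<psi> y)"
proof (rule Bochner_Integration.integrable_bound)
  show "integrable lborel (\<lambda>y. C * erlang_density k l y)"
    using assms by auto
  show "AE y in lborel. norm (erlang_density k l y * \<psi> y) \<le> norm (C * erlang_density k l y)"
  proof (intro AE_I2)
    fix y
    have "erlang_density k l y * \<bar>\<psi> y\<bar> \<le> erlang_density k l y * \<bar>C\<bar>"
      using C[of y] \<open>0 < l\<close> by (intro mult_left_mono) auto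
    then show "norm (erlang_density k l y * \<psi> y) \<le> norm (C * erlang_density k l y)"
      using \<open>0 < l\<close> by (simp add: abs_mult mult.commute)
  qed
qed simp

definition poisson_weight :: "real \<Rightarrow> real \<Rightarrow> nat \<Rightarrow> real" where
  "poisson_weight \<mu> t j = exp (- \<mu> * t) * (\<mu> * t) ^ j / fact j"

lemma poisson_weight_measurable [measurable]: "(\<lambda>t. poisson_weight \<mu> t j) \<in> borel_measurable borel"
  unfolding poisson_weight_def by measurable

lemma poisson_weight_bounds:
  assumes "0 < \<mu>" "0 \<le> t"
  shows "0 \<le> poisson_weight \<mu> t j" "poisson_weight \<mu> t j \<le> 1"
proof -
  show "0 \<le> poisson_weight \<mu> t j"
    using assms by (simp add: poisson_weight_def)
  have "exp (- \<mu> * t) * ((\<mu> * t) ^ j / fact j) \<le> exp (- \<mu> * t) * exp (\<mu> * t)"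
    using assms by (intro mult_left_mono power_div_fact_le_exp) auto
  then show "poisson_weight \<mu> t j \<le> 1"
    by (simp add: poisson_weight_def exp_minus field_simps)
qed

lemma poisson_weight_add:
  fixes a y :: real
  shows "poisson_weight \<mu> (a + y) d
    = (\<Sum>l\<le>d. \<mu> ^ d / (fact l * fact (d - l)) * (a ^ (d - l) * exp (- \<mu> * a)) * (y ^ l * exp (- \<mu> * y)))"
proof -
  have "poisson_weight \<mu> (a + y) d = exp (- \<mu> * a) * exp (- \<mu> * y) * \<mu> ^ d * (y + a) ^ d / fact d"
  proof -
    have "(\<mu> * (a + y)) ^ d = \<mu> ^ d * (y + a) ^ d"
      by (simp add: power_mult_distrib add.commute)
    moreover have "exp (- \<mu> * (a + y)) = exp (- \<mu> * a) * exp (- \<mu> * y)"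
      by (simp add: exp_add[symmetric] algebra_simps)
    ultimately show ?thesis
      by (simp add: poisson_weight_def)
  qed
  also have "\<dots> = (\<Sum>l\<le>d. exp (- \<mu> * a) * exp (- \<mu> * y) * \<mu> ^ d * (real (d choose l) * y ^ l * a ^ (d - l)) / fact d)"
    by (simp add: binomial_ring sum_distrib_left sum_divide_distrib)
  also have "\<dots> = (\<Sum>l\<le>d. \<mu> ^ d / (fact l * fact (d - l)) * (a ^ (d - l) * exp (- \<mu> * a)) * (y ^ l * exp (- \<mu> * y)))"
    by (intro sum.cong refl) (simp add: binomial_fact field_simps)
  finally show ?thesis .
qed

lemma erlang_density_add:
  fixes t y :: real
  assumes "0 \<le> t" "0 \<le> y"
  shows "erlang_density m \<mu> (t + y) = (\<Sum>k\<le>m. poisson_weight \<mu> t (m - k) * erlang_density k \<mu> y)"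
proof -
  have "erlang_density m \<mu> (t + y) = \<mu> ^ Suc m * (y + t) ^ m * exp (- \<mu> * (t + y)) / fact m"
    using assms by (simp add: erlang_density_def add.commute)
  also have "\<dots> = (\<Sum>k\<le>m. \<mu> ^ Suc m * (real (m choose k) * y ^ k * t ^ (m - k)) * exp (- \<mu> * (t + y)) / fact m)"
    by (simp add: binomial_ring sum_distrib_left sum_distrib_right sum_divide_distrib)
  also have "\<dots> = (\<Sum>k\<le>m. poisson_weight \<mu> t (m - k) * erlang_density k \<mu> y)"
  proof (intro sum.cong refl)
    fix k assume "k \<in> {..m}"
    then have powers: "\<mu> ^ Suc m = \<mu> ^ (m - k) * \<mu> ^ Suc k"
      by (simp add: power_add[symmetric])
    have exps: "exp (- \<mu> * (t + y)) = exp (- \<mu> * t) * exp (- \<mu> * y)"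
      by (simp add: distrib_left exp_add[symmetric])
    show "\<mu> ^ Suc m * (real (m choose k) * y ^ k * t ^ (m - k)) * exp (- \<mu> * (t + y)) / fact m
        = poisson_weight \<mu> t (m - k) * erlang_density k \<mu> y"
      using assms \<open>k \<in> {..m}\<close> unfolding powers exps
      by (simp add: poisson_weight_def erlang_density_def binomial_fact power_mult_distrib field_simps)
  qed
  finally show ?thesis .
qed

text \<open>Expectation under \<open>G \<mu> i\<close>: \<open>i\<close> counts phases (the library's \<open>erlang_density k\<close> has
  \<open>k + 1\<close>), and \<open>i = 0\<close> is the point mass at 0.\<close>

definition erlang_expectation :: "real \<Rightarrow> nat \<Rightarrow> (real \<Rightarrow> real) \<Rightarrow> real" where
  "erlang_expectation \<mu> i \<psi> = (if i = 0 then \<psi> 0 else LINT y|lborel. erlang_density (i - 1) \<mu> y * \<psi> y)"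

lemma erlang_expectation_const: "0 < \<mu> \<Longrightarrow> erlang_expectation \<mu> i (\<lambda>_. c) = c"
  by (simp add: erlang_expectation_def)

lemma erlang_expectation_le_indicator:
  assumes "0 < \<mu>" "0 \<le> x"
  shows "erlang_expectation \<mu> i (\<lambda>y. if y \<le> x then 1 else 0) = G \<mu> i x"
proof (cases "i = 0")
  case False
  have "(\<integral>\<^sup>+ y. ennreal (erlang_density (i - 1) \<mu> y * (if y \<le> x then 1 else 0)) \<partial>lborel)
      = (\<integral>\<^sup>+ y. ennreal (erlang_density (i - 1) \<mu> y) * indicator {..x} y \<partial>lborel)"
    by (intro nn_integral_cong) (auto simp: indicator_def)
  also have "\<dots> = ennreal (erlang_CDF (i - 1) \<mu> x)"
    by (rule nn_integral_erlang_density[OF \<open>0 < \<mu>\<close>])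
  finally have "has_bochner_integral lborel (\<lambda>y. erlang_density (i - 1) \<mu> y * (if y \<le> x then 1 else 0))
      (erlang_CDF (i - 1) \<mu> x)"
    using assms by (intro has_bochner_integral_nn_integral) auto
  then show ?thesis
    using False by (simp add: erlang_expectation_def G_def has_bochner_integral_iff)
qed (use assms in \<open>simp add: erlang_expectation_def G_def\<close>)

lemma integral_erlang_density_shift:
  fixes \<phi> :: "real \<Rightarrow> real"
  assumes \<mu>: "0 < \<mu>" and t: "0 \<le> t" and [measurable]: "\<phi> \<in> borel_measurable borel"
    and C: "\<And>y. \<bar>\<phi> y\<bar> \<le> C"
  shows "(LINT b|lborel. erlang_density m \<mu> b * (indicator {t..} b * \<phi> (b - t)))
       = (\<Sum>k\<le>m. poisson_weight \<mu> t (m - k) * erlang_expectation \<mu> (Suc k) \<phi>)"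
proof -
  have "(LINT b|lborel. erlang_density m \<mu> b * (indicator {t..} b * \<phi> (b - t)))
      = (LINT y|lborel. erlang_density m \<mu> (t + y) * (indicator {t..} (t + y) * \<phi> (t + y - t)))"
    using lborel_integral_real_affine[of 1 "\<lambda>b. erlang_density m \<mu> b * (indicator {t..} b * \<phi> (b - t))" t]
    by simp
  also have "\<dots> = (LINT y|lborel. (\<Sum>k\<le>m. poisson_weight \<mu> t (m - k) * (erlang_density k \<mu> y * \<phi> y)))"
  proof (intro Bochner_Integration.integral_cong refl)
    fix y :: real
    show "erlang_density m \<mu> (t + y) * (indicator {t..} (t + y) * \<phi> (t + y - t))
        = (\<Sum>k\<le>m. poisson_weight \<mu> t (m - k) * (erlang_density k \<mu> y * \<phi> y))"
      using erlang_density_add[OF t, of y m \<mu>]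
      by (cases "0 \<le> y") (auto simp: sum_distrib_right mult.assoc erlang_density_def)
  qed
  also have "\<dots> = (\<Sum>k\<le>m. poisson_weight \<mu> t (m - k) * (LINT y|lborel. erlang_density k \<mu> y * \<phi> y))"
    using integrable_erlang_density_mult_bounded[OF \<mu> _ C] by simp
  finally show ?thesis
    by (simp add: erlang_expectation_def)
qed

lemma erlang_expectation_reflected_shift:
  fixes \<psi> :: "real \<Rightarrow> real"
  assumes \<mu>: "0 < \<mu>" and t: "0 \<le> t" and \<psi>[measurable]: "\<psi> \<in> borel_measurable borel"
    and C: "\<And>y. \<bar>\<psi> y\<bar> \<le> C"
  shows "erlang_expectation \<mu> (Suc m) (\<lambda>b. \<psi> (max 0 (b - t)))
       = (\<Sum>k\<le>m. poisson_weight \<mu> t (m - k) * (erlang_expectation \<mu> (Suc k) \<psi> - \<psi> 0)) + \<psi> 0"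
proof -
  let ?f = "erlang_density m \<mu>"
  have split: "?f b * \<psi> (max 0 (b - t))
      = ?f b * (indicator {t..} b * \<psi> (b - t)) + \<psi> 0 * (?f b - ?f b * (indicator {t..} b * 1))" for b
    by (cases "t \<le> b") (auto simp: indicator_def max_def)
  have bounded: "\<bar>indicator {t..} b * \<psi> (b - t)\<bar> \<le> C" "\<bar>indicator {t..} b * (1::real)\<bar> \<le> 1" for b
    using C[of "b - t"] order.trans[OF abs_ge_zero C] by (auto simp: indicator_def)
  have integrable: "integrable lborel (\<lambda>b. ?f b * (indicator {t..} b * \<psi> (b - t)))"
      "integrable lborel (\<lambda>b. ?f b * (indicator {t..} b * 1))"
    by (rule integrable_erlang_density_mult_bounded[OF \<mu> _ bounded(1)] integrable_erlang_density_mult_bounded[OF \<mu> _ bounded(2)]; simp)+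
  have "erlang_expectation \<mu> (Suc m) (\<lambda>b. \<psi> (max 0 (b - t)))
      = (LINT b|lborel. ?f b * (indicator {t..} b * \<psi> (b - t)) + \<psi> 0 * (?f b - ?f b * (indicator {t..} b * 1)))"
    unfolding erlang_expectation_def by (simp del: mult_1_right add: split)
  also have "\<dots> = (LINT b|lborel. ?f b * (indicator {t..} b * \<psi> (b - t)))
        + \<psi> 0 * ((LINT b|lborel. ?f b) - (LINT b|lborel. ?f b * (indicator {t..} b * 1)))"
    using integrable \<mu>
    by (simp add: Bochner_Integration.integral_add Bochner_Integration.integral_diff
        Bochner_Integration.integrable_diff integrable_erlang_density)
  also have "\<dots> = (\<Sum>k\<le>m. poisson_weight \<mu> t (m - k) * erlang_expectation \<mu> (Suc k) \<psi>)
        + \<psi> 0 * (1 - (\<Sum>k\<le>m. poisson_weight \<mu> t (m - k)))"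
    using integral_erlang_density_shift[OF \<mu> t \<psi> C] integral_erlang_density_shift[OF \<mu> t, of "\<lambda>_. 1" 1 m]
    by (simp add: erlang_expectation_const[OF \<mu>] \<mu>)
  finally show ?thesis
    by (simp add: algebra_simps sum_subtractf sum_distrib_left sum_distrib_right)
qed

text \<open>\<open>y ^ l * exp (- \<mu> * y)\<close> on \<open>y \<ge> 0\<close>, truncated so that it is bounded.\<close>

definition power_exp_kernel :: "real \<Rightarrow> nat \<Rightarrow> real \<Rightarrow> real" where
  "power_exp_kernel \<mu> l y = max 0 y ^ l * exp (- \<mu> * max 0 y)"

lemma power_exp_kernel_measurable [measurable]: "power_exp_kernel \<mu> l \<in> borel_measurable borel"
  unfolding power_exp_kernel_def by measurable

lemma abs_power_exp_kernel_le: "0 < \<mu> \<Longrightarrow> \<bar>power_exp_kernel \<mu> l y\<bar> \<le> fact l / \<mu> ^ l"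
  unfolding power_exp_kernel_def using power_mult_exp_le[of "max 0 y" \<mu> l] by (simp add: abs_mult)

lemma erlang_expectation_power_exp_kernel:
  assumes \<mu>: "0 < \<mu>"
  shows "erlang_expectation \<mu> 0 (power_exp_kernel \<mu> l) = 0 ^ l"
    and "erlang_expectation \<mu> (Suc k) (power_exp_kernel \<mu> l)
           = \<mu> ^ Suc k * fact (k + l) / (fact k * (2 * \<mu>) ^ Suc (k + l))"
proof -
  show "erlang_expectation \<mu> 0 (power_exp_kernel \<mu> l) = 0 ^ l"
    by (simp add: erlang_expectation_def power_exp_kernel_def)
  define c where "c = \<mu> ^ Suc k * fact (k + l) / (fact k * (2 * \<mu>) ^ Suc (k + l))"
  have "erlang_density k \<mu> y * power_exp_kernel \<mu> l y = c * erlang_density (k + l) (2 * \<mu>) y" for y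
  proof (cases "y < 0")
    case False
    have "exp (- \<mu> * y) * exp (- \<mu> * y) = exp (- (2 * \<mu>) * y)"
      by (simp add: exp_add[symmetric])
    then show ?thesis
      using False \<mu> unfolding c_def
      by (simp add: erlang_density_def power_exp_kernel_def power_add field_simps)
  qed (simp add: erlang_density_def)
  then show "erlang_expectation \<mu> (Suc k) (power_exp_kernel \<mu> l) = c"
    using \<mu> by (simp add: erlang_expectation_def)
qed

section \<open>The weights \<open>\<varpi>\<close> and the transition matrix\<close>

text \<open>The coefficient of \<open>E[Y^l e^{-\<mu> Y}]\<close> in \<open>E[poisson_weight \<mu> (X + Y) d]\<close> for
  independent \<open>X\<close>, \<open>Y\<close>, where \<open>\<alpha>\<close> is the Laplace transform of \<open>X\<close>
  (see \<open>expectation_poisson_weight_add\<close>).\<close>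

definition laplace_shift_coeff :: "(real \<Rightarrow> real) \<Rightarrow> real \<Rightarrow> nat \<Rightarrow> nat \<Rightarrow> real" where
  "laplace_shift_coeff \<alpha> \<mu> d l = \<mu> ^ d / (fact l * fact (d - l)) * ((- 1) ^ (d - l) * (deriv ^^ (d - l)) \<alpha> \<mu>)"

lemma varpi2_pos_eq_laplace_shift:
  "varpi2_pos \<alpha> N \<mu> w j = (\<Sum>l\<le>N - j. laplace_shift_coeff \<alpha> \<mu> (N - j) l * (w ^ l * exp (- \<mu> * w)))"
proof -
  have "(- \<mu>) ^ (N - j) * exp (- \<mu> * w) * ((- w) ^ l / fact l * ((deriv ^^ (N - j - l)) \<alpha> \<mu> / fact (N - j - l)))
      = laplace_shift_coeff \<alpha> \<mu> (N - j) l * (w ^ l * exp (- \<mu> * w))" if "l \<le> N - j" for l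
  proof -
    have "(- 1 :: real) ^ (N - j) = (- 1) ^ (N - j - l) * (- 1) ^ l"
      by (metis le_add_diff_inverse2 power_add that)
    then show ?thesis
      by (simp add: laplace_shift_coeff_def power_minus[of \<mu>] power_minus[of w] field_simps)
  qed
  then show ?thesis
    unfolding varpi2_pos_def sum_distrib_left atMost_atLeast0 by (intro sum.cong) auto
qed

text \<open>Hence \<open>p_pos \<alpha> N \<mu> i j = E[poisson_weight \<mu> (A + Y) (N - j)]\<close> for \<open>Y\<close> with law
  \<open>G \<mu> i\<close> independent of \<open>A\<close>.\<close>

lemma p_pos_eq_laplace_shift:
  assumes "0 < \<mu>"
  shows "p_pos \<alpha> N \<mu> i j
    = (\<Sum>l\<le>N - j. laplace_shift_coeff \<alpha> \<mu> (N - j) l * erlang_expectation \<mu> i (power_exp_kernel \<mu> l))"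
proof (cases i)
  case 0
  have "(\<Sum>l\<le>N - j. laplace_shift_coeff \<alpha> \<mu> (N - j) l * 0 ^ l) = laplace_shift_coeff \<alpha> \<mu> (N - j) 0"
    by (subst sum.atMost_shift) simp
  then show ?thesis
    using 0 by (simp add: erlang_expectation_power_exp_kernel[OF assms] p_pos_def
        laplace_shift_coeff_def power_minus[of \<mu>])
next
  case (Suc k)
  have "laplace_shift_coeff \<alpha> \<mu> (N - j) l * (\<mu> ^ Suc k * fact (k + l) / (fact k * (2 * \<mu>) ^ Suc (k + l)))
      = (- \<mu>) ^ (N - j) / 2 ^ i * (real ((i + l - 1) choose (i - 1))
          * ((deriv ^^ (N - j - l)) \<alpha> \<mu> / fact (N - j - l)) * (- 1 / (2 * \<mu>)) ^ l)"
    if "l \<le> N - j" for l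
  proof -
    have "(- 1 :: real) ^ (N - j) = (- 1) ^ (N - j - l) * (- 1) ^ l"
      by (metis le_add_diff_inverse2 power_add that)
    then show ?thesis
      using assms Suc by (cases "even l") (simp_all add: laplace_shift_coeff_def binomial_fact
          power_minus[of \<mu>] power_divide power_mult_distrib power_add field_simps)
  qed
  then show ?thesis
    using Suc by (simp add: erlang_expectation_power_exp_kernel[OF assms] p_pos_def atMost_atLeast0
        sum_distrib_left)
qed

lemma sum_laplace_shift_mixture_eq_pmat:
  assumes "0 < \<mu>" "1 \<le> j"
  shows "(\<Sum>l\<le>N - j. laplace_shift_coeff \<alpha> \<mu> (N - j) l
            * (\<Sum>i = 0..N. v i * erlang_expectation \<mu> i (power_exp_kernel \<mu> l)))
         = (\<Sum>i = 0..N. v i * pmat \<alpha> N \<mu> i j)"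
  using assms by (simp add: pmat_def p_pos_eq_laplace_shift sum_distrib_left mult.left_commute sum.swap[of _ "{0..N}"])

lemma sum_pmat_zero:
  "(\<Sum>i = 0..N. v i * pmat \<alpha> N \<mu> i 0) = (\<Sum>i = 0..N. v i) - (\<Sum>j = 1..N. \<Sum>i = 0..N. v i * pmat \<alpha> N \<mu> i j)"
  by (simp add: pmat_def right_diff_distrib sum_subtractf sum_distrib_left) (rule sum.swap)

lemma varpi_2: "varpi \<alpha> N \<mu> w 2 = varpi2 \<alpha> N \<mu> w"
  by (simp add: varpi_def fun_eq_iff)

lemma varpi_Suc: "2 \<le> n \<Longrightarrow> varpi \<alpha> N \<mu> w (Suc n) j = (\<Sum>i = 0..N. varpi \<alpha> N \<mu> w n i * pmat \<alpha> N \<mu> i j)"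
  by (auto simp: varpi_def dest!: le_Suc_ex)

section \<open>Mixed Erlang laws\<close>

context prob_space
begin

lemma integrable_poisson_weight:
  assumes "0 < \<mu>" and [measurable]: "T \<in> borel_measurable M" and "AE \<omega> in M. 0 \<le> T \<omega>"
  shows "integrable M (\<lambda>\<omega>. poisson_weight \<mu> (T \<omega>) j)"
proof (rule integrable_const_bound)
  show "AE \<omega> in M. norm (poisson_weight \<mu> (T \<omega>) j) \<le> 1"
    using assms(3) by eventually_elim (use poisson_weight_bounds[OF \<open>0 < \<mu>\<close>] in auto)
qed simp

lemma expectation_indep_var_density:
  fixes Bv T :: "'a \<Rightarrow> real" and g :: "real \<Rightarrow> real" and f :: "real \<Rightarrow> real \<Rightarrow> real"
  assumes B: "distributed M lborel Bv g" and g_nonneg: "\<And>b. 0 \<le> g b"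
    and T[measurable]: "T \<in> borel_measurable M" and indep: "indep_var borel Bv borel T"
    and f[measurable]: "case_prod f \<in> borel_measurable (borel \<Otimes>\<^sub>M borel)" and C: "\<And>b t. \<bar>f b t\<bar> \<le> C"
    and h[measurable]: "h \<in> borel_measurable borel"
    and inner: "AE \<omega> in M. (LINT b|lborel. g b * f b (T \<omega>)) = h (T \<omega>)"
  shows "(\<integral>\<omega>. f (Bv \<omega>) (T \<omega>) \<partial>M) = (\<integral>\<omega>. h (T \<omega>) \<partial>M)"
proof -
  have [measurable]: "Bv \<in> borel_measurable M" "g \<in> borel_measurable borel"
    using distributed_measurable[OF B] distributed_borel_measurable[OF B] g_nonneg
    by simp_all
  define PB where "PB = distr M borel Bv"
  define PT where "PT = distr M borel T"
  interpret PB: prob_space PB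
    unfolding PB_def by (rule prob_space_distr) simp
  interpret PT: prob_space PT
    unfolding PT_def by (rule prob_space_distr) simp
  interpret P: pair_prob_space PB PT ..
  have sets_PB [simp]: "sets PB = sets borel" and sets_PT [simp]: "sets PT = sets borel"
    by (simp_all add: PB_def PT_def)
  have joint: "distr M (borel \<Otimes>\<^sub>M borel) (\<lambda>\<omega>. (Bv \<omega>, T \<omega>)) = PB \<Otimes>\<^sub>M PT"
    using indep unfolding indep_var_distribution_eq PB_def PT_def by simp
  have PB_density: "PB = density lborel g"
    using distributed_distr_eq_density[OF B] unfolding PB_def by (simp cong: distr_cong)
  have f_integrable: "integrable (PB \<Otimes>\<^sub>M PT) (case_prod f)"
    by (rule P.integrable_const_bound[where B = C])
      (auto simp: C measurable_cong_sets[OF sets_pair_measure_cong[OF sets_PB sets_PT] refl])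
  have inner_measurable [measurable]: "(\<lambda>t. \<integral>b. f b t \<partial>PB) \<in> borel_measurable borel"
    using borel_measurable_integrable[OF P.integrable_snd[OF f_integrable]]
    by (simp add: measurable_cong_sets[OF sets_PT refl])
  have "(\<integral>\<omega>. f (Bv \<omega>) (T \<omega>) \<partial>M) = (\<integral>t. (\<integral>b. f b t \<partial>PB) \<partial>PT)"
    using P.integral_snd[OF f_integrable] unfolding joint[symmetric]
    by (subst (asm) integral_distr) auto
  also have "\<dots> = (\<integral>\<omega>. (\<integral>b. f b (T \<omega>) \<partial>PB) \<partial>M)"
    unfolding PT_def by (subst integral_distr) auto
  also have "\<dots> = (\<integral>\<omega>. h (T \<omega>) \<partial>M)"
    using inner g_nonneg unfolding PB_density
    by (intro integral_cong_AE) (auto simp: integral_density)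
  finally show ?thesis .
qed

lemma expectation_reflected_erlang_difference:
  fixes Bv T :: "'a \<Rightarrow> real" and \<psi> :: "real \<Rightarrow> real"
  assumes \<mu>: "0 < \<mu>" and B: "distributed M lborel Bv (erlang_density m \<mu>)"
    and T[measurable]: "T \<in> borel_measurable M" and T0: "AE \<omega> in M. 0 \<le> T \<omega>"
    and indep: "indep_var borel Bv borel T"
    and \<psi>[measurable]: "\<psi> \<in> borel_measurable borel" and C: "\<And>y. \<bar>\<psi> y\<bar> \<le> C"
  shows "(\<integral>\<omega>. \<psi> (max 0 (Bv \<omega> - T \<omega>)) \<partial>M)
       = (\<Sum>k\<le>m. (\<integral>\<omega>. poisson_weight \<mu> (T \<omega>) (m - k) \<partial>M) * (erlang_expectation \<mu> (Suc k) \<psi> - \<psi> 0)) + \<psi> 0"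
proof -
  have "(\<integral>\<omega>. \<psi> (max 0 (Bv \<omega> - T \<omega>)) \<partial>M)
      = (\<integral>\<omega>. (\<Sum>k\<le>m. poisson_weight \<mu> (T \<omega>) (m - k) * (erlang_expectation \<mu> (Suc k) \<psi> - \<psi> 0)) + \<psi> 0 \<partial>M)"
  proof (rule expectation_indep_var_density[OF B _ T indep])
    show "AE \<omega> in M. (LINT b|lborel. erlang_density m \<mu> b * \<psi> (max 0 (b - T \<omega>)))
        = (\<Sum>k\<le>m. poisson_weight \<mu> (T \<omega>) (m - k) * (erlang_expectation \<mu> (Suc k) \<psi> - \<psi> 0)) + \<psi> 0"
      using T0 by eventually_elim
        (use erlang_expectation_reflected_shift[OF \<mu> _ \<psi> C] in \<open>simp add: erlang_expectation_def\<close>)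
  qed (use \<mu> C in auto)
  also have "\<dots> = (\<Sum>k\<le>m. (\<integral>\<omega>. poisson_weight \<mu> (T \<omega>) (m - k) \<partial>M) * (erlang_expectation \<mu> (Suc k) \<psi> - \<psi> 0)) + \<psi> 0"
    using integrable_poisson_weight[OF \<mu> T T0] by (simp add: Bochner_Integration.integral_add prob_space)
  finally show ?thesis .
qed

text \<open>Stated for all bounded test functions rather than for indicators only, since the
  induction step integrates \<open>power_exp_kernel\<close> against the law.\<close>

definition mixed_erlang_law :: "real \<Rightarrow> nat \<Rightarrow> (nat \<Rightarrow> real) \<Rightarrow> ('a \<Rightarrow> real) \<Rightarrow> bool" where
  "mixed_erlang_law \<mu> N v X \<longleftrightarrow> (\<forall>\<psi> C. \<psi> \<in> borel_measurable borel \<longrightarrow> (\<forall>y. \<bar>\<psi> y\<bar> \<le> C) \<longrightarrow>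
      (\<integral>\<omega>. \<psi> (X \<omega>) \<partial>M) = (\<Sum>i = 0..N. v i * erlang_expectation \<mu> i \<psi>))"

lemma mixed_erlang_lawD:
  "mixed_erlang_law \<mu> N v X \<Longrightarrow> \<psi> \<in> borel_measurable borel \<Longrightarrow> (\<And>y. \<bar>\<psi> y\<bar> \<le> C) \<Longrightarrow>
    (\<integral>\<omega>. \<psi> (X \<omega>) \<partial>M) = (\<Sum>i = 0..N. v i * erlang_expectation \<mu> i \<psi>)"
  unfolding mixed_erlang_law_def by blast

lemma mixed_erlang_law_sum_weights:
  assumes "0 < \<mu>" "mixed_erlang_law \<mu> N v X"
  shows "(\<Sum>i = 0..N. v i) = 1"
  using mixed_erlang_lawD[OF assms(2), of "\<lambda>_. 1" 1]
  by (simp add: erlang_expectation_const[OF assms(1)] prob_space)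

lemma mixed_erlang_law_cdf:
  assumes "0 < \<mu>" "0 \<le> x" and [measurable]: "X \<in> borel_measurable M"
    and "mixed_erlang_law \<mu> N v X"
  shows "measure M {\<omega> \<in> space M. X \<omega> \<le> x} = (\<Sum>i = 0..N. v i * G \<mu> i x)"
proof -
  have "measure M {\<omega> \<in> space M. X \<omega> \<le> x} = (\<integral>\<omega>. indicator {\<omega> \<in> space M. X \<omega> \<le> x} \<omega> \<partial>M)"
    by (simp add: Int_absorb2)
  also have "\<dots> = (\<integral>\<omega>. (if X \<omega> \<le> x then 1 else 0) \<partial>M)"
    by (intro Bochner_Integration.integral_cong) (auto simp: indicator_def)
  also have "\<dots> = (\<Sum>i = 0..N. v i * G \<mu> i x)"
    using mixed_erlang_lawD[OF assms(4), of "\<lambda>y. if y \<le> x then 1 else 0" 1]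
    by (simp add: erlang_expectation_le_indicator[OF assms(1,2)])
  finally show ?thesis .
qed

lemma mixed_erlang_law_reflected:
  fixes Bv T :: "'a \<Rightarrow> real"
  assumes \<mu>: "0 < \<mu>" and N: "1 \<le> N" and B: "distributed M lborel Bv (erlang_density (N - 1) \<mu>)"
    and T: "T \<in> borel_measurable M" "AE \<omega> in M. 0 \<le> T \<omega>" and indep: "indep_var borel Bv borel T"
    and weights: "\<And>j. j \<in> {1..N} \<Longrightarrow> (\<integral>\<omega>. poisson_weight \<mu> (T \<omega>) (N - j) \<partial>M) = v j"
    and weight_0: "v 0 = 1 - (\<Sum>j = 1..N. v j)"
  shows "mixed_erlang_law \<mu> N v (\<lambda>\<omega>. max 0 (Bv \<omega> - T \<omega>))"
  unfolding mixed_erlang_law_def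
proof (intro allI impI)
  fix \<psi> :: "real \<Rightarrow> real" and C
  assume \<psi>: "\<psi> \<in> borel_measurable borel" and C: "\<forall>y. \<bar>\<psi> y\<bar> \<le> C"
  have "(\<integral>\<omega>. \<psi> (max 0 (Bv \<omega> - T \<omega>)) \<partial>M)
      = (\<Sum>k\<le>N - 1. (\<integral>\<omega>. poisson_weight \<mu> (T \<omega>) (N - 1 - k) \<partial>M)
          * (erlang_expectation \<mu> (Suc k) \<psi> - erlang_expectation \<mu> 0 \<psi>)) + erlang_expectation \<mu> 0 \<psi>"
    using expectation_reflected_erlang_difference[OF \<mu> B T indep \<psi> C[rule_format]]
    by (simp add: erlang_expectation_def)
  also have "\<dots> = (\<Sum>j = 1..N. v j * (erlang_expectation \<mu> j \<psi> - erlang_expectation \<mu> 0 \<psi>))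
      + erlang_expectation \<mu> 0 \<psi>"
    using N weights sum.shift_bounds_cl_Suc_ivl[of "\<lambda>j. v j * (erlang_expectation \<mu> j \<psi> - erlang_expectation \<mu> 0 \<psi>)" 0 "N - 1"]
    by (simp add: atMost_atLeast0 Suc_diff_Suc)
  also have "\<dots> = (\<Sum>i = 0..N. v i * erlang_expectation \<mu> i \<psi>)"
    by (simp add: sum.atLeast_Suc_atMost weight_0 algebra_simps sum_subtractf sum_distrib_left sum_distrib_right)
  finally show "(\<integral>\<omega>. \<psi> (max 0 (Bv \<omega> - T \<omega>)) \<partial>M) = (\<Sum>i = 0..N. v i * erlang_expectation \<mu> i \<psi>)" .
qed

lemma expectation_poisson_weight_add:
  fixes X Y :: "'a \<Rightarrow> real"
  assumes \<mu>: "0 < \<mu>" and X[measurable]: "X \<in> borel_measurable M" and X0: "AE \<omega> in M. 0 \<le> X \<omega>"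
    and Y[measurable]: "Y \<in> borel_measurable M" and Y0: "AE \<omega> in M. 0 \<le> Y \<omega>"
    and indep: "indep_var borel X borel Y"
  shows "(\<integral>\<omega>. poisson_weight \<mu> (X \<omega> + Y \<omega>) d \<partial>M)
    = (\<Sum>l\<le>d. laplace_shift_coeff (\<lambda>s. \<integral>\<omega>. exp (- s * X \<omega>) \<partial>M) \<mu> d l * (\<integral>\<omega>. power_exp_kernel \<mu> l (Y \<omega>) \<partial>M))"
proof -
  let ?c = "\<lambda>l. \<mu> ^ d / (fact l * fact (d - l))"
  have integrable_Y: "integrable M (\<lambda>\<omega>. power_exp_kernel \<mu> l (Y \<omega>))" for l
    using abs_power_exp_kernel_le[OF \<mu>] by (intro integrable_const_bound) auto
  have indep_l: "indep_var borel (\<lambda>\<omega>. X \<omega> ^ r * exp (- \<mu> * X \<omega>)) borel (\<lambda>\<omega>. power_exp_kernel \<mu> l (Y \<omega>))" for r l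
    using indep_var_compose[OF indep, of "\<lambda>x. x ^ r * exp (- \<mu> * x)" borel "power_exp_kernel \<mu> l" borel]
    by (simp add: comp_def)
  note product = indep_var_lebesgue_integral[OF indep_l integrable_power_mult_exp(1)[OF X X0 \<mu>] integrable_Y]
    indep_var_integrable[OF indep_l integrable_power_mult_exp(1)[OF X X0 \<mu>] integrable_Y]
  have "(\<integral>\<omega>. poisson_weight \<mu> (X \<omega> + Y \<omega>) d \<partial>M)
      = (\<integral>\<omega>. (\<Sum>l\<le>d. ?c l * ((X \<omega> ^ (d - l) * exp (- \<mu> * X \<omega>)) * power_exp_kernel \<mu> l (Y \<omega>))) \<partial>M)"
    using Y0 by (intro integral_cong_AE)
      (auto elim!: eventually_mono simp: poisson_weight_add power_exp_kernel_def mult_ac)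
  also have "\<dots> = (\<Sum>l\<le>d. ?c l * (\<integral>\<omega>. X \<omega> ^ (d - l) * exp (- \<mu> * X \<omega>) \<partial>M) * (\<integral>\<omega>. power_exp_kernel \<mu> l (Y \<omega>) \<partial>M))"
    using product by (simp add: mult.assoc)
  also have "\<dots> = (\<Sum>l\<le>d. laplace_shift_coeff (\<lambda>s. \<integral>\<omega>. exp (- s * X \<omega>) \<partial>M) \<mu> d l * (\<integral>\<omega>. power_exp_kernel \<mu> l (Y \<omega>) \<partial>M))"
    by (simp only: expectation_power_mult_exp[OF X X0 \<mu>]) (simp add: laplace_shift_coeff_def)
  finally show ?thesis .
qed

end

section \<open>The waiting times\<close>

lemma (in prob_space) indep_var_component_fun:
  fixes X :: "'i \<Rightarrow> 'a \<Rightarrow> real"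
  assumes indep: "indep_vars (\<lambda>_. borel) X I" and "i \<in> I" "K \<subseteq> I" "i \<notin> K"
    and g: "g \<in> borel_measurable (PiM K (\<lambda>_. borel))" and local: "\<And>f. g (restrict f K) = g f"
  shows "indep_var borel (X i) borel (\<lambda>\<omega>. g (\<lambda>k. X k \<omega>))"
proof -
  have "indep_var borel ((\<lambda>f. f i) \<circ> (\<lambda>\<omega>. restrict (\<lambda>k. X k \<omega>) {i})) borel (g \<circ> (\<lambda>\<omega>. restrict (\<lambda>k. X k \<omega>) K))"
  proof (rule indep_var_compose[OF indep_var_restrict[OF indep]])
    show "(\<lambda>f. f i) \<in> borel_measurable (PiM {i} (\<lambda>_. borel))"
      by (rule measurable_component_singleton) simp
  qed (use assms in auto)
  then show ?thesis
    by (simp add: comp_def local)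
qed

text \<open>The waiting times as functions of a sample path \<open>f\<close>, with \<open>f (Inl n) = A n\<close>
  and \<open>f (Inr n) = B n\<close>; index 0 is a junk value.\<close>

fun waiting_time :: "real \<Rightarrow> nat \<Rightarrow> (nat + nat \<Rightarrow> real) \<Rightarrow> real" where
  "waiting_time w 0 f = w"
| "waiting_time w (Suc 0) f = w"
| "waiting_time w (Suc (Suc n)) f = max 0 (f (Inr (Suc (Suc n))) - f (Inl (Suc n)) - waiting_time w (Suc n) f)"

lemma waiting_time_initial [simp]: "waiting_time w 0 = (\<lambda>_. w)" "waiting_time w (Suc 0) = (\<lambda>_. w)"
  by (simp_all add: fun_eq_iff)

definition waiting_time_inputs :: "nat \<Rightarrow> (nat + nat) set" where
  "waiting_time_inputs n = Inl ` {1..<n} \<union> Inr ` {2..n}"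

lemma waiting_time_cong:
  "(\<And>i. i \<in> waiting_time_inputs n \<Longrightarrow> f i = g i) \<Longrightarrow> waiting_time w n f = waiting_time w n g"
proof (induction w n f rule: waiting_time.induct)
  case (3 w n f)
  then have "waiting_time w (Suc n) f = waiting_time w (Suc n) g"
    by (intro "3.IH") (auto simp: waiting_time_inputs_def)
  moreover have "f (Inr (Suc (Suc n))) = g (Inr (Suc (Suc n)))" "f (Inl (Suc n)) = g (Inl (Suc n))"
    using "3.prems" by (auto simp: waiting_time_inputs_def)
  ultimately show ?case
    by simp
qed auto

lemma waiting_time_restrict:
  "waiting_time_inputs n \<subseteq> K \<Longrightarrow> waiting_time w n (restrict f K) = waiting_time w n f"
  by (rule waiting_time_cong) auto

lemma waiting_time_measurable:
  "waiting_time_inputs n \<subseteq> J \<Longrightarrow> waiting_time w n \<in> borel_measurable (PiM J (\<lambda>_. borel))"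
proof (induction w n "undefined :: nat + nat \<Rightarrow> real" rule: waiting_time.induct)
  case (3 w n)
  moreover have "waiting_time_inputs (Suc n) \<subseteq> waiting_time_inputs (Suc (Suc n))"
    by (auto simp: waiting_time_inputs_def)
  ultimately have [measurable]: "waiting_time w (Suc n) \<in> borel_measurable (PiM J (\<lambda>_. borel))"
    by blast
  have "Inr (Suc (Suc n)) \<in> J" "Inl (Suc n) \<in> J"
    using "3.prems" by (auto simp: waiting_time_inputs_def)
  then have [measurable]: "(\<lambda>f. f (Inr (Suc (Suc n)))) \<in> borel_measurable (PiM J (\<lambda>_. borel :: real measure))"
      "(\<lambda>f. f (Inl (Suc n))) \<in> borel_measurable (PiM J (\<lambda>_. borel :: real measure))"
    by (simp_all add: measurable_component_singleton)
  have "waiting_time w (Suc (Suc n))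
      = (\<lambda>f. max 0 (f (Inr (Suc (Suc n))) - f (Inl (Suc n)) - waiting_time w (Suc n) f))"
    by (simp add: fun_eq_iff)
  then show ?case
    by simp
qed simp_all

lemma waiting_time_inputs_indices:
  "waiting_time_inputs n \<subseteq> Inl ` {1..} \<union> Inr ` {1..}"
  "Inl n \<notin> waiting_time_inputs n" "Inr (Suc n) \<notin> waiting_time_inputs n"
  by (auto simp: waiting_time_inputs_def)

locale erlang_waiting_times = prob_space M for M :: "'a measure" +
  fixes A B W :: "nat \<Rightarrow> 'a \<Rightarrow> real" and N :: nat and \<mu> w :: real
  assumes N: "N \<ge> 1" and \<mu>: "\<mu> > 0" and w: "w \<ge> 0"
    and A_rv: "\<And>n. n \<ge> 1 \<Longrightarrow> A n \<in> borel_measurable M"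
    and A_nonneg: "\<And>n. n \<ge> 1 \<Longrightarrow> AE x in M. A n x \<ge> 0"
    and A_id: "\<And>n. n \<ge> 1 \<Longrightarrow> distr M borel (A n) = distr M borel (A 1)"
    and B_erl: "\<And>n. n \<ge> 1 \<Longrightarrow> distributed M lborel (B n) (erlang_density (N - 1) \<mu>)"
    and indep: "indep_vars (\<lambda>_. borel) (case_sum A B) (Inl ` {1..} \<union> Inr ` {1..})"
    and W1: "W 1 = (\<lambda>x. w)"
    and W_Suc: "\<And>n. n \<ge> 1 \<Longrightarrow> W (Suc n) = (\<lambda>x. max 0 (B (Suc n) x - A n x - W n x))"
begin

abbreviation \<alpha> :: "real \<Rightarrow> real" where
  "\<alpha> \<equiv> \<lambda>s. \<integral>x. exp (- s * A 1 x) \<partial>M"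

lemma W_1 [simp]: "W (Suc 0) = (\<lambda>_. w)"
  using W1 by simp

lemma W_eq_waiting_time: "n \<ge> 1 \<Longrightarrow> W n = (\<lambda>\<omega>. waiting_time w n (\<lambda>i. case_sum A B i \<omega>))"
proof (induction n rule: nat_induct_at_least)
  case (Suc n)
  then obtain m where "n = Suc m"
    using not0_implies_Suc by fastforce
  with Suc show ?case
    by (simp add: W_Suc)
qed (simp add: W1)

lemma W_nonneg: "n \<ge> 1 \<Longrightarrow> W n \<omega> \<ge> 0"
  by (induction n rule: nat_induct_at_least) (simp_all add: W1 W_Suc w)

lemma W_measurable [measurable]: "n \<ge> 1 \<Longrightarrow> W n \<in> borel_measurable M"
proof (induction n rule: nat_induct_at_least)
  case (Suc n)
  have [measurable]: "B (Suc n) \<in> borel_measurable M" "A n \<in> borel_measurable M"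
    using distributed_measurable[OF B_erl] A_rv Suc.hyps by auto
  show ?case
    unfolding W_Suc[OF Suc.hyps] using Suc.IH by measurable
qed (simp add: W1)

lemma indep_A_W:
  assumes n: "n \<ge> 1"
  shows "indep_var borel (A n) borel (W n)"
proof -
  have "indep_var borel (case_sum A B (Inl n)) borel (\<lambda>\<omega>. waiting_time w n (\<lambda>k. case_sum A B k \<omega>))"
    using n by (intro indep_var_component_fun[OF indep _ waiting_time_inputs_indices(1,2)]
        waiting_time_measurable waiting_time_restrict) auto
  then show ?thesis
    using n by (simp add: W_eq_waiting_time)
qed

lemma indep_B_A_W:
  assumes n: "n \<ge> 1"
  shows "indep_var borel (B (Suc n)) borel (\<lambda>\<omega>. A n \<omega> + W n \<omega>)"
proof -
  let ?K = "insert (Inl n) (waiting_time_inputs n)"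
  have "(\<lambda>f. f (Inl n)) \<in> borel_measurable (PiM ?K (\<lambda>_. borel :: real measure))"
    by (simp add: measurable_component_singleton)
  moreover have "waiting_time w n \<in> borel_measurable (PiM ?K (\<lambda>_. borel))"
    by (rule waiting_time_measurable) auto
  ultimately have g: "(\<lambda>f. f (Inl n) + waiting_time w n f) \<in> borel_measurable (PiM ?K (\<lambda>_. borel))"
    by measurable
  have "indep_var borel (case_sum A B (Inr (Suc n))) borel
      (\<lambda>\<omega>. (\<lambda>f. f (Inl n) + waiting_time w n f) (\<lambda>k. case_sum A B k \<omega>))"
  proof (rule indep_var_component_fun[OF indep _ _ _ g])
    show "restrict f ?K (Inl n) + waiting_time w n (restrict f ?K) = f (Inl n) + waiting_time w n f" for f
      using waiting_time_restrict[of n ?K w f] by auto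
  qed (use n waiting_time_inputs_indices(1,3)[of n] in auto)
  then show ?thesis
    using n by (simp add: W_eq_waiting_time)
qed

lemma laplace_transform_A: "n \<ge> 1 \<Longrightarrow> (\<lambda>s. \<integral>x. exp (- s * A n x) \<partial>M) = \<alpha>"
proof
  fix s
  assume n: "n \<ge> 1"
  have [measurable]: "A n \<in> borel_measurable M" "A 1 \<in> borel_measurable M"
    using A_rv n by auto
  have "(\<integral>x. exp (- s * A n x) \<partial>M) = (\<integral>a. exp (- s * a) \<partial>distr M borel (A n))"
    by (simp add: integral_distr)
  also have "\<dots> = (\<integral>a. exp (- s * a) \<partial>distr M borel (A 1))"
    by (simp only: A_id[OF n])
  also have "\<dots> = (\<integral>x. exp (- s * A 1 x) \<partial>M)"
    using A_rv[of 1] by (intro integral_distr) auto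
  finally show "(\<integral>x. exp (- s * A n x) \<partial>M) = \<alpha> s" .
qed

lemma mixed_erlang_law_W_Suc:
  assumes n: "n \<ge> 1"
    and weights: "\<And>j. j \<in> {1..N} \<Longrightarrow>
      (\<Sum>l\<le>N - j. laplace_shift_coeff \<alpha> \<mu> (N - j) l * (\<integral>\<omega>. power_exp_kernel \<mu> l (W n \<omega>) \<partial>M)) = v j"
    and weight_0: "v 0 = 1 - (\<Sum>j = 1..N. v j)"
  shows "mixed_erlang_law \<mu> N v (W (Suc n))"
proof -
  have [measurable]: "A n \<in> borel_measurable M"
    using A_rv n by auto
  have T_nonneg: "AE \<omega> in M. 0 \<le> A n \<omega> + W n \<omega>"
    using A_nonneg[OF n] by eventually_elim (use W_nonneg[OF n] in auto)
  have "(\<integral>\<omega>. poisson_weight \<mu> (A n \<omega> + W n \<omega>) (N - j) \<partial>M) = v j" if "j \<in> {1..N}" for j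
    using expectation_poisson_weight_add[OF \<mu> _ A_nonneg[OF n] W_measurable[OF n] _ indep_A_W[OF n]]
      weights[OF that] W_nonneg[OF n] laplace_transform_A[OF n] by simp
  moreover have "distributed M lborel (B (Suc n)) (erlang_density (N - 1) \<mu>)"
    by (rule B_erl) simp
  ultimately have "mixed_erlang_law \<mu> N v (\<lambda>\<omega>. max 0 (B (Suc n) \<omega> - (A n \<omega> + W n \<omega>)))"
    using W_measurable[OF n] T_nonneg indep_B_A_W[OF n] weight_0
    by (intro mixed_erlang_law_reflected[OF \<mu> N]) auto
  then show ?thesis
    by (simp add: W_Suc[OF n] diff_diff_eq)
qed

lemma mixed_erlang_law_W: "n \<ge> 2 \<Longrightarrow> mixed_erlang_law \<mu> N (varpi \<alpha> N \<mu> w n) (W n)"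
proof (induction n rule: nat_induct_at_least)
  case base
  have "(\<integral>\<omega>. power_exp_kernel \<mu> l (W 1 \<omega>) \<partial>M) = w ^ l * exp (- \<mu> * w)" for l
    by (simp add: power_exp_kernel_def w prob_space)
  then have "mixed_erlang_law \<mu> N (varpi2 \<alpha> N \<mu> w) (W (Suc 1))"
    by (intro mixed_erlang_law_W_Suc) (simp_all add: varpi2_def varpi2_pos_eq_laplace_shift)
  then show ?case
    by (simp only: varpi_2 Suc_1)
next
  case (Suc n)
  let ?v = "varpi \<alpha> N \<mu> w n"
  have kernel: "(\<integral>\<omega>. power_exp_kernel \<mu> l (W n \<omega>) \<partial>M)
      = (\<Sum>i = 0..N. ?v i * erlang_expectation \<mu> i (power_exp_kernel \<mu> l))" for l
    by (rule mixed_erlang_lawD[OF Suc.IH power_exp_kernel_measurable abs_power_exp_kernel_le[OF \<mu>]])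
  have "(\<Sum>i = 0..N. ?v i) = 1"
    by (rule mixed_erlang_law_sum_weights[OF \<mu> Suc.IH])
  show ?case
  proof (rule mixed_erlang_law_W_Suc)
    show "(\<Sum>l\<le>N - j. laplace_shift_coeff \<alpha> \<mu> (N - j) l * (\<integral>\<omega>. power_exp_kernel \<mu> l (W n \<omega>) \<partial>M))
        = varpi \<alpha> N \<mu> w (Suc n) j" if "j \<in> {1..N}" for j
      using that Suc.hyps by (simp add: kernel varpi_Suc sum_laplace_shift_mixture_eq_pmat[OF \<mu>])
    show "varpi \<alpha> N \<mu> w (Suc n) 0 = 1 - (\<Sum>j = 1..N. varpi \<alpha> N \<mu> w (Suc n) j)"
      using Suc.hyps \<open>(\<Sum>i = 0..N. ?v i) = 1\<close> by (simp add: varpi_Suc sum_pmat_zero)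
  qed (use Suc.hyps in simp)
qed

lemma waiting_time_cdf:
  assumes "n \<ge> 2" "x \<ge> 0"
  shows "measure M {\<omega> \<in> space M. W n \<omega> \<le> x} = (\<Sum>i = 0..N. varpi \<alpha> N \<mu> w n i * G \<mu> i x)"
  using assms by (intro mixed_erlang_law_cdf[OF \<mu> _ W_measurable mixed_erlang_law_W]) auto

end

theorem theorem5p1:
  fixes M :: "'a measure" and A B W :: "nat \<Rightarrow> 'a \<Rightarrow> real"
    and N :: nat and \<mu> w :: real
  assumes "prob_space M"
    and "N \<ge> 1" and "\<mu> > 0" and "w \<ge> 0"
    and A_rv: "\<And>n. n \<ge> 1 \<Longrightarrow> A n \<in> borel_measurable M"
    and A_nonneg: "\<And>n. n \<ge> 1 \<Longrightarrow> AE x in M. A n x \<ge> 0"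
    and A_id: "\<And>n. n \<ge> 1 \<Longrightarrow> distr M borel (A n) = distr M borel (A 1)"
    and B_erl: "\<And>n. n \<ge> 1 \<Longrightarrow> distributed M lborel (B n) (erlang_density (N - 1) \<mu>)"
    and indep: "prob_space.indep_vars M (\<lambda>_. borel) (case_sum A B)
                  (Inl ` {1..} \<union> Inr ` {1..})"
    and W1: "W 1 = (\<lambda>x. w)"
    and Wrec: "\<And>n. n \<ge> 1 \<Longrightarrow> W (Suc n) = (\<lambda>x. max 0 (B (Suc n) x - A n x - W n x))"
  defines "\<alpha> \<equiv> (\<lambda>s::real. \<integral>x. exp (- s * A 1 x) \<partial>M)"
  shows "\<forall>n \<ge> 2. \<forall>x \<ge> 0.
           measure M {\<omega> \<in> space M. W n \<omega> \<le> x} = (\<Sum>i = 0..N. varpi \<alpha> N \<mu> w n i * G \<mu> i x)"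
proof -
  interpret erlang_waiting_times M A B W N \<mu> w
    by (intro erlang_waiting_times.intro erlang_waiting_times_axioms.intro) (fact assms)+
  show ?thesis
    unfolding \<alpha>_def using waiting_time_cdf by blast
qed

end
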